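(* Fix $y>0$ and prices $0\le p_1'<p_1''\le y$, and consider an increase in the price of good 1 from $p_1'$ to $p_1''$. Suppose Assumptions 1 (with $U_0$ strictly increasing) and 2 hold. For a consumer $i$ with threshold $t_i$: 1. If $p_1'\ge t_i$ (no attention), then regardless of preferences $S^{EV}=0$. 2. If $U_1(y-p_1')\le U_0(y)$, then regardless of attention $S^{EV}=0$. 3. If $U_1(y-p_1'')\le U_0(y)<U_1(y-p_1')$, then for both full attention ($p_1'<p_1''<t_i$) and partial attention ($p_1'<t_i\le p_1''$) consumers, $S^{EV}=y-p_1'-U_1^{-1}(U_0(y))=p^{10}-p_1'\le p_1''-p_1'$. 4. If $U_0(y)<U_1(y-p_1'')<U_1(y-p_1')$, then (a) if $p_1'<p_1''<t_i$ (full attention), $S^{EV}=p_1''-p_1'$; (b) if $p_1'<t_i\le p_1''$ (partial attention), $S^{EV}=y-p_1'-U_1^{-1}(U_0(y))=p^{10}-p_1'>p_1''-p_1'$. Here $p^{10}$ denotes the price of good 1 satisfying $U_1(y-p^{10})=U_0(y)$.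
   Context: Two goods, $0$ (price $0$) and $1$ (price $p_1\ge0$). All consumers have common income $y>0$, choose one good and spend the remainder on a numeraire. All consumers share utility functions $U_0:(0,\infty)\to[0,\infty)$ and $U_1:[0,\infty)\to[0,\infty)$ of the numeraire amount. Each consumer $i$ has an attention-price threshold $t_i$, distributed in the population with CDF $G$; consumer $i$ considers good 1 at price $p_1$ iff $p_1<t_i$ (good 0 is always considered) and chooses her utility-maximizing considered good, ties broken toward good 0. Assumption 1: (i) $U_0$ strictly increasing, $U_1$ continuous and strictly increasing; (ii) for every $y>0$ there is $\bar p_1\in[0,y]$ with $U_0(y)\ge U_1(y-\bar p_1)$. Assumption 2: $G(0)=0$. Equivalent variation of consumer $i$ for the price increase from $p_1'$ to $p_1''$: if $p_1''<t_i$ (full attention), $S^{EV}$ is the solution $S$ of $\max\{U_0(y-S),U_1(y-S-p_1')\}=\max\{U_0(y),U_1(y-p_1'')\}$; if $p_1'<t_i\le p_1''$ (partial attention), it solves $\max\{U_0(y-S),U_1(y-S-p_1')\}=U_0(y)$; if $p_1'\ge t_i$ (no attention), it solves $U_0(y-S)=U_0(y)$. *)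

theory Defs
  imports "HOL-Analysis.Analysis"
begin

text \<open>Utility of a consumer with numeraire budget m who considers both goods,
  good 1 costing p: she picks the better affordable good (good 1 is affordable iff p \<le> m).\<close>
definition val2 :: "(real \<Rightarrow> real) \<Rightarrow> (real \<Rightarrow> real) \<Rightarrow> real \<Rightarrow> real \<Rightarrow> real" where
  "val2 U0 U1 m p = (if p \<le> m then max (U0 m) (U1 (m - p)) else U0 m)"

text \<open>The left-hand side requires y - S > 0,
  i.e. the compensated income stays in the domain of U0.\<close>
definition is_EV :: "(real \<Rightarrow> real) \<Rightarrow> (real \<Rightarrow> real) \<Rightarrow> real \<Rightarrow> real \<Rightarrow> real \<Rightarrow> real \<Rightarrow> real \<Rightarrow> bool" where
  "is_EV U0 U1 y p' p'' t S \<longleftrightarrow> S < y \<and>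
     (if p'' < t then val2 U0 U1 (y - S) p' = val2 U0 U1 y p''
      else if p' < t then val2 U0 U1 (y - S) p' = U0 y
      else U0 (y - S) = U0 y)"

definition p10 :: "(real \<Rightarrow> real) \<Rightarrow> (real \<Rightarrow> real) \<Rightarrow> real \<Rightarrow> real" where
  "p10 U0 U1 y = y - the_inv_into {0..} U1 (U0 y)"

end

theory Submission
  imports Defs
begin

text \<open>For a fixed price p of good 1, the attentive consumer's indirect utility
  val2 U0 U1 m p is strictly increasing in the budget m. Hence an equivalent variation
  is pinned down by any budget m0 reaching the target utility: it is y - m0. For the
  target U0 y such a budget is y itself when good 1 is unattractive at p, and
  p + q with U1 q = U0 y otherwise; for the full-attention target U1 (y - p'') > U0 y it
  is y - (p'' - p'). The inequalities against p'' - p' come from comparing q with y - p''.\<close>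

lemma strict_mono_on_val2:
  fixes U0 U1 :: "real \<Rightarrow> real"
  assumes U0: "strict_mono_on {0<..} U0" and U1: "strict_mono_on {0..} U1"
  shows "strict_mono_on {0<..} (\<lambda>m. val2 U0 U1 m p)"
proof (rule strict_mono_onI)
  fix m m' :: real
  assume "m \<in> {0<..}" "m' \<in> {0<..}" "m < m'"
  then have "U0 m < U0 m'" by (simp add: strict_mono_onD[OF U0])
  moreover have "U1 (m - p) < U1 (m' - p)" if "p \<le> m"
    using that \<open>m < m'\<close> by (simp add: strict_mono_onD[OF U1])
  ultimately show "val2 U0 U1 m p < val2 U0 U1 m' p"
    using \<open>m < m'\<close> by (auto simp: val2_def less_max_iff_disj)
qed

lemma compensated_budget_iff:
  fixes U0 U1 :: "real \<Rightarrow> real"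
  assumes "strict_mono_on {0<..} U0" and "strict_mono_on {0..} U1" and "0 < m"
  shows "S < y \<and> val2 U0 U1 (y - S) p = val2 U0 U1 m p \<longleftrightarrow> S = y - m"
  using strict_mono_on_eqD[OF strict_mono_on_val2[OF assms(1,2)], of "y - S" p m] assms(3)
  by auto

lemma val2_eq_U0:
  assumes "U1 (m - p) \<le> U0 m"
  shows "val2 U0 U1 m p = U0 m"
  using assms by (simp add: val2_def)

lemma val2_eq_U1:
  assumes "0 \<le> r" and "U0 (p + r) \<le> U1 r"
  shows "val2 U0 U1 (p + r) p = U1 r"
  using assms by (simp add: val2_def)

lemma the_inv_into_between:
  fixes f :: "real \<Rightarrow> real"
  assumes mono: "strict_mono_on {0..} f" and cont: "continuous_on {0..} f"
    and "0 \<le> a" "0 \<le> b" "f a \<le> v" "v < f b"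
  shows "a \<le> the_inv_into {0..} f v" "the_inv_into {0..} f v < b"
    "f (the_inv_into {0..} f v) = v"
proof -
  have "a < b"
    using assms(3-6) strict_mono_on_less_eq[OF mono, of b a] by fastforce
  then obtain q where q: "a \<le> q" "q \<le> b" "f q = v"
    using IVT'[of f a v b] assms(3,5,6) continuous_on_subset[OF cont, of "{a..b}"] by force
  have "the_inv_into {0..} f v = q"
    using the_inv_into_f_f[OF strict_mono_on_imp_inj_on[OF mono]] q \<open>0 \<le> a\<close> by force
  moreover have "q \<noteq> b" using q \<open>v < f b\<close> by auto
  ultimately show "a \<le> the_inv_into {0..} f v" "the_inv_into {0..} f v < b"
    "f (the_inv_into {0..} f v) = v"
    using q by auto
qed

lemma U1_zero_less_U0:
  fixes U0 U1 :: "real \<Rightarrow> real"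
  assumes U0: "strict_mono_on {0<..} U0" and U1: "strict_mono_on {0..} U1"
    and A1ii: "\<And>z. z > 0 \<Longrightarrow> \<exists>pb \<in> {0..z}. U0 z \<ge> U1 (z - pb)"
    and "0 < y"
  shows "U1 0 < U0 y"
proof -
  obtain pb where pb: "pb \<in> {0..y/2}" "U1 (y/2 - pb) \<le> U0 (y/2)"
    using A1ii[of "y/2"] \<open>0 < y\<close> by auto
  have "U1 0 \<le> U1 (y/2 - pb)" using strict_mono_on_leD[OF U1, of 0 "y/2 - pb"] pb by auto
  also have "\<dots> \<le> U0 (y/2)" by (fact pb(2))
  also have "\<dots> < U0 y" using strict_mono_onD[OF U0, of "y/2" y] \<open>0 < y\<close> by auto
  finally show ?thesis .
qed

lemma compensation_to_U0_unattractive: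
  fixes U0 U1 :: "real \<Rightarrow> real"
  assumes "strict_mono_on {0<..} U0" and "strict_mono_on {0..} U1"
    and "0 < y" and "U1 (y - p) \<le> U0 y"
  shows "S < y \<and> val2 U0 U1 (y - S) p = U0 y \<longleftrightarrow> S = 0"
  using compensated_budget_iff[OF assms(1-3), of S y p] val2_eq_U0[of U1 y p U0] assms(4)
  by simp

lemma compensation_to_U0_attractive:
  fixes U0 U1 :: "real \<Rightarrow> real"
  assumes U0: "strict_mono_on {0<..} U0" and U1: "strict_mono_on {0..} U1"
    and cont: "continuous_on {0..} U1" and U1_0: "U1 0 < U0 y"
    and "0 \<le> p" "p \<le> y" and attractive: "U0 y < U1 (y - p)"
  shows "S < y \<and> val2 U0 U1 (y - S) p = U0 y
    \<longleftrightarrow> S = y - p - the_inv_into {0..} U1 (U0 y)"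
proof -
  define q where "q = the_inv_into {0..} U1 (U0 y)"
  have q: "0 \<le> q" "q < y - p" "U1 q = U0 y"
    using the_inv_into_between[OF U1 cont order_refl, of "y - p" "U0 y"] U1_0 attractive
      \<open>p \<le> y\<close>
    unfolding q_def by auto
  moreover have "q \<noteq> 0" using q(3) U1_0 by auto
  ultimately have "0 < q" by simp
  have "U0 (p + q) \<le> U1 q"
    using strict_mono_on_leD[OF U0, of "p + q" y] \<open>0 < q\<close> q \<open>0 \<le> p\<close> by auto
  then have "val2 U0 U1 (p + q) p = U0 y"
    using val2_eq_U1[of q U0 p U1] q by simp
  then show ?thesis
    using compensated_budget_iff[OF U0 U1, of "p + q" S y p] \<open>0 < q\<close> \<open>0 \<le> p\<close>
    unfolding q_def by (auto simp: algebra_simps)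
qed

lemma compensation_to_attractive_new_price:
  fixes U0 U1 :: "real \<Rightarrow> real"
  assumes U0: "strict_mono_on {0<..} U0" and U1: "strict_mono_on {0..} U1"
    and U1_0: "U1 0 < U0 y" and prices: "0 \<le> p'" "p' \<le> p''" "p'' \<le> y"
    and attractive: "U0 y < U1 (y - p'')"
  shows "S < y \<and> val2 U0 U1 (y - S) p' = val2 U0 U1 y p'' \<longleftrightarrow> S = p'' - p'"
proof -
  have "p'' \<noteq> y" using attractive U1_0 by auto
  then have "U0 (p' + (y - p'')) \<le> U1 (y - p'')"
    using strict_mono_on_leD[OF U0, of "p' + (y - p'')" y] attractive prices by auto
  then have "val2 U0 U1 (p' + (y - p'')) p' = val2 U0 U1 y p''"
    using attractive prices val2_eq_U1[of "y - p''" U0 p' U1] by (simp add: val2_def)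
  then show ?thesis
    using compensated_budget_iff[OF U0 U1, of "p' + (y - p'')" S y p'] \<open>p'' \<noteq> y\<close> prices
    by auto
qed

theorem lemma1:
  fixes U0 U1 :: "real \<Rightarrow> real" and y p' p'' t :: real
  assumes U0_mono: "strict_mono_on {0<..} U0"
    and U0_nonneg: "\<And>m. m > 0 \<Longrightarrow> U0 m \<ge> 0"
    and U1_mono: "strict_mono_on {0..} U1"
    and U1_cont: "continuous_on {0..} U1"
    and U1_nonneg: "\<And>m. m \<ge> 0 \<Longrightarrow> U1 m \<ge> 0"
    and A1ii: "\<And>z. z > 0 \<Longrightarrow> \<exists>pb \<in> {0..z}. U0 z \<ge> U1 (z - pb)"
    and t_pos: "t > 0"
    and y_pos: "y > 0"
    and prices: "0 \<le> p'" "p' < p''" "p'' \<le> y"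
  shows
    "(p' \<ge> t \<longrightarrow> (\<forall>S. is_EV U0 U1 y p' p'' t S \<longleftrightarrow> S = 0))
     \<and> (U1 (y - p') \<le> U0 y \<longrightarrow> (\<forall>S. is_EV U0 U1 y p' p'' t S \<longleftrightarrow> S = 0))
     \<and> (U1 (y - p'') \<le> U0 y \<and> U0 y < U1 (y - p') \<and> p' < t \<longrightarrow>
          (\<forall>S. is_EV U0 U1 y p' p'' t S \<longleftrightarrow> S = y - p' - the_inv_into {0..} U1 (U0 y))
          \<and> y - p' - the_inv_into {0..} U1 (U0 y) = p10 U0 U1 y - p'
          \<and> p10 U0 U1 y - p' \<le> p'' - p')
     \<and> (U0 y < U1 (y - p'') \<and> U1 (y - p'') < U1 (y - p') \<longrightarrow>
          (p'' < t \<longrightarrow> (\<forall>S. is_EV U0 U1 y p' p'' t S \<longleftrightarrow> S = p'' - p'))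
          \<and> (p' < t \<and> t \<le> p'' \<longrightarrow>
               (\<forall>S. is_EV U0 U1 y p' p'' t S \<longleftrightarrow> S = y - p' - the_inv_into {0..} U1 (U0 y))
               \<and> y - p' - the_inv_into {0..} U1 (U0 y) = p10 U0 U1 y - p'
               \<and> p10 U0 U1 y - p' > p'' - p'))"
proof -
  define q where "q = the_inv_into {0..} U1 (U0 y)"
  have U1_0: "U1 0 < U0 y" by (rule U1_zero_less_U0[OF U0_mono U1_mono A1ii y_pos])
  have "U1 (y - p'') < U1 (y - p')"
    using strict_mono_onD[OF U1_mono, of "y - p''" "y - p'"] prices by auto
  then have full_target: "U1 (y - p') \<le> U0 y \<or> U1 (y - p'') \<le> U0 y \<Longrightarrow>
      val2 U0 U1 y p'' = U0 y"
    by (auto intro: val2_eq_U0)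
  have no_attention: "S < y \<and> U0 (y - S) = U0 y \<longleftrightarrow> S = 0" for S
    using strict_mono_on_eqD[OF U0_mono, of "y - S" y] y_pos by auto
  note unattractive = compensation_to_U0_unattractive[OF U0_mono U1_mono y_pos]
  have "p' \<le> y" using prices by simp
  note attractive = compensation_to_U0_attractive[OF U0_mono U1_mono U1_cont U1_0 prices(1)
      \<open>p' \<le> y\<close>, folded q_def]
  note full_attention_attractive = compensation_to_attractive_new_price[OF U0_mono U1_mono
      U1_0 prices(1) less_imp_le[OF prices(2)] prices(3)]
  have q_ge_residual: "y - p'' \<le> q" if "U1 (y - p'') \<le> U0 y" "U0 y < U1 (y - p')"
    using the_inv_into_between(1)[OF U1_mono U1_cont _ _ that] prices unfolding q_def by simp
  have q_less_residual: "q < y - p''" if "U0 y < U1 (y - p'')"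
    using the_inv_into_between(2)[OF U1_mono U1_cont order_refl _ _ that] U1_0 prices
    unfolding q_def by simp
  show ?thesis
    unfolding is_EV_def p10_def q_def[symmetric]
    using prices no_attention unattractive[of p'] attractive full_target
      full_attention_attractive q_ge_residual q_less_residual
    by (auto simp: not_less)
qed

end
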